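(* Let $(H,L_H)$ be a right-resolving, regular and follower-separated labeled graph. Then $(H,L_H)$ is predecessor-separated.
   Context: A labeled graph $(H,L_H)$: finite directed graph (vertices $V_H$, edges $E_H$, source/terminal maps $s_H,t_H$) without sinks or sources, labeling $L_H:E_H\to A$, edge shift $X_H$; $L_H$ acts coordinatewise; it presents $Y=L_H(X_H)$. Right-resolving: distinct edges with the same source have distinct labels. $f_H(v)=\{L_H(x): x$ a right-infinite path starting at $v\}$; $p_H(v)=\{L_H(z): z=\cdots z_{-2}z_{-1}$ a left-infinite path whose last edge ends at $v\}$. For $y\in Y$, $F(y)=\{w\in Y[0,\infty): y_{(-\infty,-1]}w\in Y\}$ with $Y[0,\infty)=\{y_{[0,\infty)}:y\in Y\}$. A vertex $v$ is regular if there is $z\in X_H$ whose edge $z_{-1}$ ends at $v$ with $f_H(v)=F(L_H(z))$; the graph is regular if all vertices are. Follower-separated: $f_H(v)=f_H(w)\Rightarrow v=w$. Predecessor-separated: $p_H(v)=p_H(w)\Rightarrow v=w$. *)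

theory Defs
  imports Main
begin

definition labeled_graph ::
  "'v set \<Rightarrow> 'e set \<Rightarrow> ('e \<Rightarrow> 'v) \<Rightarrow> ('e \<Rightarrow> 'v) \<Rightarrow> ('e \<Rightarrow> 'a) \<Rightarrow> bool" where
  "labeled_graph V E s t L \<longleftrightarrow>
     finite V \<and> finite E \<and>
     (\<forall>e\<in>E. s e \<in> V \<and> t e \<in> V) \<and>
     (\<forall>v\<in>V. \<exists>e\<in>E. s e = v) \<and>
     (\<forall>v\<in>V. \<exists>e\<in>E. t e = v)"

definition edge_shift :: "'e set \<Rightarrow> ('e \<Rightarrow> 'v) \<Rightarrow> ('e \<Rightarrow> 'v) \<Rightarrow> (int \<Rightarrow> 'e) set" where
  "edge_shift E s t = {x. (\<forall>i. x i \<in> E) \<and> (\<forall>i. t (x i) = s (x (i + 1)))}"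

definition presented_shift ::
  "'e set \<Rightarrow> ('e \<Rightarrow> 'v) \<Rightarrow> ('e \<Rightarrow> 'v) \<Rightarrow> ('e \<Rightarrow> 'a) \<Rightarrow> (int \<Rightarrow> 'a) set" where
  "presented_shift E s t L = (\<lambda>x. L \<circ> x) ` edge_shift E s t"

definition right_resolving ::
  "'e set \<Rightarrow> ('e \<Rightarrow> 'v) \<Rightarrow> ('e \<Rightarrow> 'a) \<Rightarrow> bool" where
  "right_resolving E s L \<longleftrightarrow>
     (\<forall>e1\<in>E. \<forall>e2\<in>E. e1 \<noteq> e2 \<and> s e1 = s e2 \<longrightarrow> L e1 \<noteq> L e2)"

definition follower_set ::
  "'e set \<Rightarrow> ('e \<Rightarrow> 'v) \<Rightarrow> ('e \<Rightarrow> 'v) \<Rightarrow> ('e \<Rightarrow> 'a) \<Rightarrow> 'v \<Rightarrow> (nat \<Rightarrow> 'a) set" where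
  "follower_set E s t L v =
     {L \<circ> x | x. (\<forall>n. x n \<in> E) \<and> (\<forall>n. t (x n) = s (x (Suc n))) \<and> s (x 0) = v}"

text \<open>A left-infinite path \<open>\<cdots> z_{-2} z_{-1}\<close> is encoded as \<open>z :: nat \<Rightarrow> 'e\<close>
  with \<open>z n\<close> standing for \<open>z_{-(n+1)}\<close>; its label is encoded in the same way.\<close>
definition predecessor_set ::
  "'e set \<Rightarrow> ('e \<Rightarrow> 'v) \<Rightarrow> ('e \<Rightarrow> 'v) \<Rightarrow> ('e \<Rightarrow> 'a) \<Rightarrow> 'v \<Rightarrow> (nat \<Rightarrow> 'a) set" where
  "predecessor_set E s t L v =
     {L \<circ> z | z. (\<forall>n. z n \<in> E) \<and> (\<forall>n. t (z (Suc n)) = s (z n)) \<and> t (z 0) = v}"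

definition right_rays :: "(int \<Rightarrow> 'a) set \<Rightarrow> (nat \<Rightarrow> 'a) set" where
  "right_rays Y = (\<lambda>y. \<lambda>n. y (int n)) ` Y"

definition future_set :: "(int \<Rightarrow> 'a) set \<Rightarrow> (int \<Rightarrow> 'a) \<Rightarrow> (nat \<Rightarrow> 'a) set" where
  "future_set Y y = {w \<in> right_rays Y. (\<lambda>i. if i < 0 then y i else w (nat i)) \<in> Y}"

definition regular_vertex ::
  "'e set \<Rightarrow> ('e \<Rightarrow> 'v) \<Rightarrow> ('e \<Rightarrow> 'v) \<Rightarrow> ('e \<Rightarrow> 'a) \<Rightarrow> 'v \<Rightarrow> bool" where
  "regular_vertex E s t L v \<longleftrightarrow>
     (\<exists>z\<in>edge_shift E s t. t (z (-1)) = v \<and>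
        follower_set E s t L v = future_set (presented_shift E s t L) (L \<circ> z))"

definition regular_graph ::
  "'v set \<Rightarrow> 'e set \<Rightarrow> ('e \<Rightarrow> 'v) \<Rightarrow> ('e \<Rightarrow> 'v) \<Rightarrow> ('e \<Rightarrow> 'a) \<Rightarrow> bool" where
  "regular_graph V E s t L \<longleftrightarrow> (\<forall>v\<in>V. regular_vertex E s t L v)"

definition follower_separated ::
  "'v set \<Rightarrow> 'e set \<Rightarrow> ('e \<Rightarrow> 'v) \<Rightarrow> ('e \<Rightarrow> 'v) \<Rightarrow> ('e \<Rightarrow> 'a) \<Rightarrow> bool" where
  "follower_separated V E s t L \<longleftrightarrow>
     (\<forall>v\<in>V. \<forall>w\<in>V. follower_set E s t L v = follower_set E s t L w \<longrightarrow> v = w)"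

definition predecessor_separated ::
  "'v set \<Rightarrow> 'e set \<Rightarrow> ('e \<Rightarrow> 'v) \<Rightarrow> ('e \<Rightarrow> 'v) \<Rightarrow> ('e \<Rightarrow> 'a) \<Rightarrow> bool" where
  "predecessor_separated V E s t L \<longleftrightarrow>
     (\<forall>v\<in>V. \<forall>w\<in>V. predecessor_set E s t L v = predecessor_set E s t L w \<longrightarrow> v = w)"

end

theory Submission
  imports Defs
begin

text \<open>If \<open>p(v) = p(w)\<close> and \<open>v\<close> is regular with witness \<open>z\<close>, the labelled left half of \<open>z\<close>
  is a predecessor of \<open>w\<close>; gluing the underlying left path to any right path from \<open>w\<close> gives
  a point of \<open>X_H\<close>, so \<open>f(w) \<subseteq> F(L(z)) = f(v)\<close>. By symmetry \<open>f(v) = f(w)\<close>, and follower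
  separation gives \<open>v = w\<close>.\<close>

text \<open>The left ray is read as in \<open>predecessor_set\<close>: \<open>z n\<close> sits at position \<open>-(n+1)\<close>.\<close>

definition join_rays :: "(nat \<Rightarrow> 'b) \<Rightarrow> (nat \<Rightarrow> 'b) \<Rightarrow> int \<Rightarrow> 'b" where
  "join_rays z x i = (if i < 0 then z (nat (- i - 1)) else x (nat i))"

lemma join_rays_nonneg [simp]: "join_rays z x (int n) = x n"
  by (simp add: join_rays_def)

lemma comp_join_rays: "f \<circ> join_rays z x = join_rays (f \<circ> z) (f \<circ> x)"
  by (auto simp: join_rays_def)

lemma join_rays_in_edge_shift:
  assumes "\<forall>n. z n \<in> E" and z_path: "\<forall>n. t (z (Suc n)) = s (z n)"
    and "\<forall>n. x n \<in> E" and x_path: "\<forall>n. t (x n) = s (x (Suc n))"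
    and meet: "t (z 0) = s (x 0)"
  shows "join_rays z x \<in> edge_shift E s t"
  unfolding edge_shift_def
proof (intro CollectI conjI allI)
  fix i :: int
  show "join_rays z x i \<in> E"
    using assms by (simp add: join_rays_def)
  consider "i < -1" | "i = -1" | "i \<ge> 0" by linarith
  then show "t (join_rays z x i) = s (join_rays z x (i + 1))"
  proof cases
    case 1
    then have "nat (- i - 1) = Suc (nat (- (i + 1) - 1))" by simp
    with 1 z_path show ?thesis by (simp add: join_rays_def)
  next
    case 2
    with meet show ?thesis by (simp add: join_rays_def)
  next
    case 3
    then have "nat (i + 1) = Suc (nat i)" by simp
    with 3 x_path show ?thesis by (simp add: join_rays_def)
  qed
qed

lemma left_half_in_predecessor_set:
  assumes "z \<in> edge_shift E s t"
  shows "(\<lambda>n. L (z (- int n - 1))) \<in> predecessor_set E s t L (t (z (-1)))"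
proof -
  have "t (z (- int (Suc n) - 1)) = s (z (- int n - 1))" for n
  proof -
    have "t (z (- int (Suc n) - 1)) = s (z (- int (Suc n) - 1 + 1))"
      using assms by (simp add: edge_shift_def)
    also have "- int (Suc n) - 1 + 1 = - int n - 1" by simp
    finally show ?thesis .
  qed
  with assms show ?thesis
    unfolding predecessor_set_def edge_shift_def
    by (auto intro!: exI[of _ "\<lambda>n. z (- int n - 1)"])
qed

lemma follower_set_subset_future_set:
  assumes "a \<in> predecessor_set E s t L w"
    and past: "\<forall>i<0. y i = a (nat (- i - 1))"
  shows "follower_set E s t L w \<subseteq> future_set (presented_shift E s t L) y"
proof
  fix u assume "u \<in> follower_set E s t L w"
  then obtain x where x: "u = L \<circ> x" "\<forall>n. x n \<in> E" "\<forall>n. t (x n) = s (x (Suc n))" "s (x 0) = w"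
    unfolding follower_set_def by blast
  obtain z where z: "a = L \<circ> z" "\<forall>n. z n \<in> E" "\<forall>n. t (z (Suc n)) = s (z n)" "t (z 0) = w"
    using assms(1) unfolding predecessor_set_def by blast
  have "join_rays z x \<in> edge_shift E s t"
    using join_rays_in_edge_shift[of z E t s x] x z by simp
  then have in_shift: "join_rays a u \<in> presented_shift E s t L"
    unfolding presented_shift_def x(1) z(1) comp_join_rays[symmetric] by (rule imageI)
  have "u = (\<lambda>n. join_rays a u (int n))" by simp
  with in_shift have "u \<in> right_rays (presented_shift E s t L)"
    unfolding right_rays_def by blast
  moreover have "(\<lambda>i. if i < 0 then y i else u (nat i)) = join_rays a u"
    using past by (intro ext) (simp add: join_rays_def)
  ultimately show "u \<in> future_set (presented_shift E s t L) y"
    using in_shift unfolding future_set_def by simp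
qed

lemma follower_set_subset_of_regular_vertex:
  assumes "regular_vertex E s t L v"
    and "predecessor_set E s t L v = predecessor_set E s t L w"
  shows "follower_set E s t L w \<subseteq> follower_set E s t L v"
proof -
  obtain z where z: "z \<in> edge_shift E s t" "t (z (-1)) = v"
    "follower_set E s t L v = future_set (presented_shift E s t L) (L \<circ> z)"
    using assms(1) unfolding regular_vertex_def by blast
  have "(\<lambda>n. L (z (- int n - 1))) \<in> predecessor_set E s t L w"
    using left_half_in_predecessor_set[OF z(1), of L] z(2) assms(2) by simp
  moreover have "\<forall>i<0. (L \<circ> z) i = L (z (- int (nat (- i - 1)) - 1))"
    by simp
  ultimately show ?thesis
    unfolding z(3) by (rule follower_set_subset_future_set)
qed

theorem lemma3p4:
  fixes V :: "'v set" and E :: "'e set" and s t :: "'e \<Rightarrow> 'v" and L :: "'e \<Rightarrow> 'a"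
  assumes "labeled_graph V E s t L"
    and "right_resolving E s L"
    and "regular_graph V E s t L"
    and "follower_separated V E s t L"
  shows "predecessor_separated V E s t L"
  unfolding predecessor_separated_def
proof (intro ballI impI)
  fix v w assume "v \<in> V" "w \<in> V"
    and same_past: "predecessor_set E s t L v = predecessor_set E s t L w"
  with assms(3) have "regular_vertex E s t L v" "regular_vertex E s t L w"
    unfolding regular_graph_def by blast+
  with same_past have "follower_set E s t L v = follower_set E s t L w"
    by (intro subset_antisym follower_set_subset_of_regular_vertex) simp_all
  with assms(4) \<open>v \<in> V\<close> \<open>w \<in> V\<close> show "v = w"
    unfolding follower_separated_def by blast
qed

end
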